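(* Let $\Omega = \mathbb{R}^{2n}$, or $\Omega = \mathbb{Z}_d^{2n}$ with $d$ prime. Let $\{(V,\vec v_j)\}_j$ be a family of epistemic states, with $V = \langle \vec f_1,\dots,\vec f_k\rangle$, such that $\vec f_k$ is totally unknown in the family and $\vec f_1,\dots,\vec f_{k-1}$ are constant. Then there exists an observable $\vec f\in\Omega$ such that $V' := \langle \vec f_1,\dots,\vec f_{k-1}\rangle \oplus \langle\vec f\rangle$ is an isotropic subspace with $V'\neq V$. Furthermore, $(V',\vec v_j)$ is a valid epistemic state for every valuation vector $\vec v_j$ of the family.
   Context: Phase space $\Omega$ (over $\mathbb R$ or $\mathbb Z_d$) with coordinates $(q_1,p_1,\dots,q_n,p_n)$. Observables are vectors $\vec f\in\Omega$, evaluated on an ontic state $\vec m$ as $\vec f^T\vec m$. Symplectic form: $\langle\vec f,\vec g\rangle = \sum_{i=1}^n (f_{2i-1}g_{2i} - f_{2i}g_{2i-1})$ (mod $d$ in the discrete case); observables commute if this vanishes. A subspace $V$ is isotropic if $\langle \vec f,\vec g\rangle=0$ for all $\vec f,\vec g\in V$. A (valid) epistemic state is a pair $(V,\vec v)$ with $V\subseteq\Omega$ isotropic and $\vec v\in\Omega$. For a family $\{(V,\vec v_j)\}_j$, an observable $\vec f_i\in V$ is constant if $\vec f_i^T\vec v_j$ is the same for all $j$, and totally unknown if for every possible value $c$ of $\vec f_i$ (every value attained by $\vec f_i^T\vec m$, $\vec m\in\Omega$) some member satisfies $\vec f_i^T\vec v_j = c$. *)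

theory Defs
  imports Main "Berlekamp_Zassenhaus.Finite_Field"
begin

text \<open>Phase space over a field: vectors are functions nat => 'a supported on
  the coordinate indices 0..2n-1; index 2i is q_(i+1), index 2i+1 is p_(i+1).\<close>

definition Omega :: "nat \<Rightarrow> (nat \<Rightarrow> 'a::field) set" where
  "Omega n = {x. \<forall>i\<ge>2*n. x i = 0}"

definition evalo :: "nat \<Rightarrow> (nat \<Rightarrow> 'a::field) \<Rightarrow> (nat \<Rightarrow> 'a) \<Rightarrow> 'a" where
  "evalo n f m = (\<Sum>i<2*n. f i * m i)"

definition symp :: "nat \<Rightarrow> (nat \<Rightarrow> 'a::field) \<Rightarrow> (nat \<Rightarrow> 'a) \<Rightarrow> 'a" where
  "symp n f g = (\<Sum>i<n. f (2*i) * g (2*i+1) - f (2*i+1) * g (2*i))"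

definition isotropic :: "nat \<Rightarrow> (nat \<Rightarrow> 'a::field) set \<Rightarrow> bool" where
  "isotropic n V \<longleftrightarrow> (\<forall>f\<in>V. \<forall>g\<in>V. symp n f g = 0)"

definition spanv :: "nat \<Rightarrow> (nat \<Rightarrow> nat \<Rightarrow> 'a::field) \<Rightarrow> (nat \<Rightarrow> 'a) set" where
  "spanv k fs = {x. \<exists>c. x = (\<lambda>t. \<Sum>i<k. c i * fs i t)}"

definition lin_indep :: "nat \<Rightarrow> (nat \<Rightarrow> nat \<Rightarrow> 'a::field) \<Rightarrow> bool" where
  "lin_indep k fs \<longleftrightarrow>
     (\<forall>c. (\<forall>t. (\<Sum>i<k. c i * fs i t) = 0) \<longrightarrow> (\<forall>i<k. c i = 0))"

definition epistemic_state :: "nat \<Rightarrow> (nat \<Rightarrow> 'a::field) set \<Rightarrow> (nat \<Rightarrow> 'a) \<Rightarrow> bool" where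
  "epistemic_state n V v \<longleftrightarrow>
     V \<subseteq> Omega n \<and> (\<lambda>t. 0) \<in> V \<and> (\<forall>x\<in>V. \<forall>y\<in>V. \<forall>a. (\<lambda>t. x t + y t) \<in> V \<and> (\<lambda>t. a * x t) \<in> V)
     \<and> isotropic n V \<and> v \<in> Omega n"

definition constant_obs :: "nat \<Rightarrow> (nat \<Rightarrow> 'a::field) \<Rightarrow> 'j set \<Rightarrow> ('j \<Rightarrow> nat \<Rightarrow> 'a) \<Rightarrow> bool" where
  "constant_obs n f J v \<longleftrightarrow> (\<forall>j\<in>J. \<forall>j'\<in>J. evalo n f (v j) = evalo n f (v j'))"

definition totally_unknown :: "nat \<Rightarrow> (nat \<Rightarrow> 'a::field) \<Rightarrow> 'j set \<Rightarrow> ('j \<Rightarrow> nat \<Rightarrow> 'a) \<Rightarrow> bool" where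
  "totally_unknown n f J v \<longleftrightarrow>
     (\<forall>c \<in> {evalo n f m | m. m \<in> Omega n}. \<exists>j\<in>J. evalo n f (v j) = c)"

definition theorem5_claim :: "nat \<Rightarrow> nat \<Rightarrow> (nat \<Rightarrow> nat \<Rightarrow> 'a::field) \<Rightarrow> 'j set \<Rightarrow> ('j \<Rightarrow> nat \<Rightarrow> 'a) \<Rightarrow> bool" where
  "theorem5_claim n k fs J v \<longleftrightarrow>
    ((k \<ge> 1 \<and> (\<forall>i<k. fs i \<in> Omega n) \<and> lin_indep k fs
      \<and> (\<forall>j\<in>J. epistemic_state n (spanv k fs) (v j))
      \<and> totally_unknown n (fs (k-1)) J v
      \<and> (\<forall>i<k-1. constant_obs n (fs i) J v))
     \<longrightarrow>
     (\<exists>f \<in> Omega n.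
        f \<notin> spanv (k-1) fs
        \<and> isotropic n (spanv k (fs((k-1) := f)))
        \<and> spanv k (fs((k-1) := f)) \<noteq> spanv k fs
        \<and> (\<forall>j\<in>J. epistemic_state n (spanv k (fs((k-1) := f))) (v j))))"

end

theory Submission
  imports Defs
begin

text \<open>Write \<open>\<omega>\<close> for the symplectic form. Then \<open>\<omega>(x, y) = x\<^sup>\<star> \<cdot> y\<close>, where \<open>x\<^sup>\<star>\<close>
  (\<open>symp_dual x\<close>) is the coordinate swap \<open>(q, p) \<mapsto> (-p, q)\<close>. This swap is invertible, so
  \<open>f\<^sub>1\<^sup>\<star>, \<dots>, f\<^sub>k\<^sup>\<star>\<close> are linearly independent and admit a dual vector \<open>f\<close>:
  \<open>\<omega>(f\<^sub>i, f) = 0\<close> for \<open>i < k\<close> and \<open>\<omega>(f\<^sub>k, f) = 1\<close>. Replacing \<open>f\<^sub>k\<close> by \<open>f\<close> keeps the generators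
  pairwise commuting, and \<open>f \<notin> V\<close> because \<open>f\<close> does not commute with \<open>f\<^sub>k \<in> V\<close>. The argument
  works over any field. Total unknownness of \<open>f\<^sub>k\<close> is used only to make the family nonempty
  (so that \<open>V\<close> is known to be isotropic), and constancy of the other observables is not
  needed at all.\<close>

definition pairing :: "nat \<Rightarrow> (nat \<Rightarrow> 'a::field) \<Rightarrow> (nat \<Rightarrow> 'a) \<Rightarrow> 'a" where
  "pairing N h g = (\<Sum>t<N. h t * g t)"

lemma pairing_sum_right: "pairing N h (\<lambda>t. \<Sum>j\<in>A. G j t) = (\<Sum>j\<in>A. pairing N h (G j))"
  unfolding pairing_def by (simp add: sum_distrib_left sum.swap[of _ "{..<N}"])

lemma pairing_scale_right: "pairing N h (\<lambda>t. c * g t) = c * pairing N h g"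
  unfolding pairing_def by (simp add: sum_distrib_left mult.left_commute)

lemma pairing_diff_right: "pairing N h (\<lambda>t. x t - y t) = pairing N h x - pairing N h y"
  unfolding pairing_def by (simp add: right_diff_distrib sum_subtractf)

lemma pairing_divide_right: "pairing N h (\<lambda>t. g t / c) = pairing N h g / c"
  unfolding pairing_def by (simp add: sum_divide_distrib)

lemma pairing_indicator: "s < N \<Longrightarrow> pairing N h (\<lambda>t. if t = s then 1 else 0) = h s"
  unfolding pairing_def by (simp add: if_distrib cong: if_cong)

lemma pairing_truncate: "pairing N h (\<lambda>t. if t < N then g t else 0) = pairing N h g"
  unfolding pairing_def by simp

definition lin_indep_on :: "nat \<Rightarrow> nat \<Rightarrow> (nat \<Rightarrow> nat \<Rightarrow> 'a::field) \<Rightarrow> bool" where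
  "lin_indep_on N k h \<longleftrightarrow> (\<forall>c. (\<forall>t<N. (\<Sum>i<k. c i * h i t) = 0) \<longrightarrow> (\<forall>i<k. c i = 0))"

definition dual_family :: "nat \<Rightarrow> nat \<Rightarrow> (nat \<Rightarrow> nat \<Rightarrow> 'a::field) \<Rightarrow> (nat \<Rightarrow> nat \<Rightarrow> 'a) \<Rightarrow> bool" where
  "dual_family N k h G \<longleftrightarrow> (\<forall>i<k. \<forall>j<k. pairing N (h j) (G i) = (if j = i then 1 else 0))"

lemma lin_indep_on_Suc_imp: "lin_indep_on N (Suc k) h \<Longrightarrow> lin_indep_on N k h"
  unfolding lin_indep_on_def
proof (intro allI impI)
  fix c i
  assume indep: "\<forall>c. (\<forall>t<N. (\<Sum>i<Suc k. c i * h i t) = 0) \<longrightarrow> (\<forall>i<Suc k. c i = 0)"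
    and zero: "\<forall>t<N. (\<Sum>i<k. c i * h i t) = 0" and "i < k"
  have "\<forall>t<N. (\<Sum>i<Suc k. (c(k := 0)) i * h i t) = 0"
    using zero by simp
  then have "\<forall>i<Suc k. (c(k := 0)) i = 0"
    using indep by blast
  with \<open>i < k\<close> show "c i = 0"
    by (metis fun_upd_other less_SucI less_not_refl)
qed

lemma dual_vector_Suc:
  assumes dual: "dual_family N k h G" and indep: "lin_indep_on N (Suc k) h"
  obtains g where "\<forall>j<k. pairing N (h j) g = 0" and "pairing N (h k) g = 1"
proof -
  define u where "u t = h k t - (\<Sum>j<k. pairing N (h k) (G j) * h j t)" for t
  have "\<exists>s<N. u s \<noteq> 0"
  proof (rule ccontr)
    define c where "c i = (if i < k then - pairing N (h k) (G i) else 1)" for i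
    have "(\<Sum>i<Suc k. c i * h i t) = (\<Sum>i<k. - pairing N (h k) (G i) * h i t) + h k t" for t
      by (simp add: c_def)
    then have "(\<Sum>i<Suc k. c i * h i t) = u t" for t
      by (simp add: u_def sum_negf)
    moreover assume "\<not> ?thesis"
    ultimately have "c k = 0"
      using indep unfolding lin_indep_on_def by auto
    then show False
      by (simp add: c_def)
  qed
  then obtain s where "s < N" and "u s \<noteq> 0" by blast
  \<comment> \<open>the indicator of \<open>s\<close>, corrected so that it pairs to \<open>0\<close> with every \<open>h j\<close>, \<open>j < k\<close>,
    and to \<open>u s\<close> with \<open>h k\<close>\<close>
  define g where "g t = ((if t = s then 1 else 0) - (\<Sum>l<k. h l s * G l t)) / u s" for t
  have pairing_g: "pairing N (h j) g = (h j s - (\<Sum>l<k. h l s * pairing N (h j) (G l))) / u s" for j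
    unfolding g_def
    by (simp add: pairing_divide_right pairing_diff_right pairing_sum_right pairing_scale_right
        pairing_indicator[OF \<open>s < N\<close>])
  show thesis
  proof
    show "\<forall>j<k. pairing N (h j) g = 0"
    proof (intro allI impI)
      fix j assume "j < k"
      then have "(\<Sum>l<k. h l s * pairing N (h j) (G l)) = (\<Sum>l<k. if l = j then h l s else 0)"
        using dual unfolding dual_family_def by (intro sum.cong) auto
      with \<open>j < k\<close> show "pairing N (h j) g = 0"
        by (simp add: pairing_g)
    qed
    show "pairing N (h k) g = 1"
      using \<open>u s \<noteq> 0\<close> by (simp add: pairing_g u_def mult.commute)
  qed
qed

lemma dual_family_Suc:
  assumes dual: "dual_family N k h G" and indep: "lin_indep_on N (Suc k) h"
  shows "\<exists>G'. dual_family N (Suc k) h G'"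
proof -
  obtain g where g_low: "\<forall>j<k. pairing N (h j) g = 0" and g_top: "pairing N (h k) g = 1"
    using dual_vector_Suc[OF assms] .
  define G' where
    "G' i = (if i = k then g else (\<lambda>t. G i t - pairing N (h k) (G i) * g t))" for i
  have "pairing N (h j) (G' i) = (if j = i then 1 else 0)" if "i < Suc k" "j < Suc k" for i j
    using that dual g_low g_top unfolding dual_family_def G'_def
    by (auto simp: pairing_diff_right pairing_scale_right less_Suc_eq)
  then show ?thesis
    unfolding dual_family_def by blast
qed

lemma dual_family_exists: "lin_indep_on N k h \<Longrightarrow> \<exists>G. dual_family N k h G"
proof (induction k)
  case 0
  then show ?case by (simp add: dual_family_def)
next
  case (Suc k)
  then show ?case
    using dual_family_Suc lin_indep_on_Suc_imp by blast
qed

definition symp_dual :: "(nat \<Rightarrow> 'a::field) \<Rightarrow> nat \<Rightarrow> 'a" where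
  "symp_dual x t = (if even t then - x (t + 1) else x (t - 1))"

lemma sum_lessThan_double:
  fixes F :: "nat \<Rightarrow> 'b::comm_monoid_add"
  shows "(\<Sum>t<2 * n. F t) = (\<Sum>i<n. F (2 * i) + F (2 * i + 1))"
  by (induction n) (auto simp: add_ac)

lemma symp_eq_pairing: "symp n x y = pairing (2 * n) (symp_dual x) y"
  unfolding symp_def pairing_def sum_lessThan_double
  by (intro sum.cong) (simp_all add: symp_dual_def algebra_simps)

lemma symp_antisym: "symp n x y = - symp n y x"
  unfolding symp_def by (simp add: sum_negf[symmetric] algebra_simps)

lemma symp_self: "symp n x x = 0"
  unfolding symp_def by (simp add: mult.commute)

lemma symp_lincomb_right: "symp n x (\<lambda>t. \<Sum>j<m. b j * G j t) = (\<Sum>j<m. b j * symp n x (G j))"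
  by (simp add: symp_eq_pairing pairing_sum_right pairing_scale_right)

lemma symp_lincomb_left: "symp n (\<lambda>t. \<Sum>j<m. b j * G j t) y = (\<Sum>j<m. b j * symp n (G j) y)"
  by (subst symp_antisym) (simp add: symp_lincomb_right sum_negf[symmetric] symp_antisym[of n y])

lemma symp_dual_lincomb:
  "symp_dual (\<lambda>t. \<Sum>i<k. c i * x i t) t = (\<Sum>i<k. c i * symp_dual (x i) t)"
  by (simp add: symp_dual_def sum_negf)

lemma symp_dual_zero_imp_zero:
  assumes "x \<in> Omega n" and "\<forall>t<2 * n. symp_dual x t = 0"
  shows "x t = 0"
proof (cases "t < 2 * n")
  case False
  with assms(1) show ?thesis by (simp add: Omega_def)
next
  case True
  show ?thesis
  proof (cases "even t")
    case True
    with \<open>t < 2 * n\<close> have "t + 1 < 2 * n" by presburger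
    with True assms(2) show ?thesis by (auto simp: symp_dual_def)
  next
    case False
    with \<open>t < 2 * n\<close> have "t - 1 < 2 * n" "even (t - 1)" "t - 1 + 1 = t" by presburger+
    with assms(2) show ?thesis by (auto simp: symp_dual_def)
  qed
qed

lemma lin_indep_on_symp_dual:
  assumes "\<forall>i<k. fs i \<in> Omega n" and "lin_indep k fs"
  shows "lin_indep_on (2 * n) k (\<lambda>i. symp_dual (fs i))"
  unfolding lin_indep_on_def
proof (intro allI impI)
  fix c i assume "\<forall>t<2 * n. (\<Sum>i<k. c i * symp_dual (fs i) t) = 0" and "i < k"
  then have "\<forall>t<2 * n. symp_dual (\<lambda>t. \<Sum>i<k. c i * fs i t) t = 0"
    by (simp add: symp_dual_lincomb)
  moreover have "(\<lambda>t. \<Sum>i<k. c i * fs i t) \<in> Omega n"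
    using assms(1) by (simp add: Omega_def)
  ultimately have "\<forall>t. (\<Sum>i<k. c i * fs i t) = 0"
    using symp_dual_zero_imp_zero by fast
  with assms(2) \<open>i < k\<close> show "c i = 0"
    unfolding lin_indep_def by blast
qed

lemma symp_dual_vector_exists:
  assumes "\<forall>j<k. fs j \<in> Omega n" and "lin_indep k fs" and "i < k"
  shows "\<exists>f\<in>Omega n. \<forall>j<k. symp n (fs j) f = (if j = i then 1 else 0)"
proof -
  obtain G where dual: "dual_family (2 * n) k (\<lambda>i. symp_dual (fs i)) G"
    using dual_family_exists[OF lin_indep_on_symp_dual[OF assms(1,2)]] by blast
  define f where "f t = (if t < 2 * n then G i t else 0)" for t
  have "f \<in> Omega n"
    by (simp add: f_def Omega_def)
  moreover have "\<forall>j<k. symp n (fs j) f = (if j = i then 1 else 0)"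
    using dual \<open>i < k\<close> unfolding dual_family_def f_def
    by (simp add: symp_eq_pairing pairing_truncate)
  ultimately show ?thesis by blast
qed

lemma spanvI: "x = (\<lambda>t. \<Sum>i<k. c i * F i t) \<Longrightarrow> x \<in> spanv k F"
  unfolding spanv_def by blast

lemma spanv_generator:
  assumes "i < k"
  shows "F i \<in> spanv k F"
proof -
  have "F i = (\<lambda>t. \<Sum>l<k. (if l = i then 1 else 0) * F l t)"
    using assms by (simp add: fun_eq_iff if_distrib[of "\<lambda>a. a * _"] cong: if_cong)
  then show ?thesis
    by (rule spanvI)
qed

lemma spanv_mono:
  assumes "m \<le> k"
  shows "spanv m F \<subseteq> spanv k F"
proof
  fix x assume "x \<in> spanv m F"
  then obtain c where "x = (\<lambda>t. \<Sum>i<m. c i * F i t)"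
    unfolding spanv_def by blast
  moreover have "(\<Sum>i<m. c i * F i t) = (\<Sum>i<k. (if i < m then c i else 0) * F i t)" for t
    using assms by (intro sum.mono_neutral_cong_left) auto
  ultimately show "x \<in> spanv k F"
    by (simp add: spanvI)
qed

lemma spanv_add:
  assumes "x \<in> spanv k F" and "y \<in> spanv k F"
  shows "(\<lambda>t. x t + y t) \<in> spanv k F"
proof -
  obtain c d where "x = (\<lambda>t. \<Sum>i<k. c i * F i t)" and "y = (\<lambda>t. \<Sum>i<k. d i * F i t)"
    using assms unfolding spanv_def by blast
  then have "(\<lambda>t. x t + y t) = (\<lambda>t. \<Sum>i<k. (c i + d i) * F i t)"
    by (simp add: sum.distrib distrib_right)
  then show ?thesis
    by (rule spanvI)
qed

lemma spanv_scale:
  assumes "x \<in> spanv k F"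
  shows "(\<lambda>t. a * x t) \<in> spanv k F"
proof -
  obtain c where "x = (\<lambda>t. \<Sum>i<k. c i * F i t)"
    using assms unfolding spanv_def by blast
  then have "(\<lambda>t. a * x t) = (\<lambda>t. \<Sum>i<k. (a * c i) * F i t)"
    by (simp add: sum_distrib_left mult.assoc)
  then show ?thesis
    by (rule spanvI)
qed

lemma spanv_zero: "(\<lambda>t. 0) \<in> spanv k F"
  unfolding spanv_def by (intro CollectI exI[of _ "\<lambda>i. 0"]) simp

lemma spanv_subset_Omega: "\<forall>i<k. F i \<in> Omega n \<Longrightarrow> spanv k F \<subseteq> Omega n"
  unfolding spanv_def Omega_def by auto

lemma isotropic_spanvI: "\<forall>i<k. \<forall>j<k. symp n (F i) (F j) = 0 \<Longrightarrow> isotropic n (spanv k F)"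
  unfolding isotropic_def spanv_def
  by (auto simp: symp_lincomb_left symp_lincomb_right)

lemma epistemic_state_spanvI:
  assumes "\<forall>i<k. F i \<in> Omega n" and "isotropic n (spanv k F)" and "v \<in> Omega n"
  shows "epistemic_state n (spanv k F) v"
  using assms spanv_subset_Omega[OF assms(1)]
  unfolding epistemic_state_def by (simp add: spanv_zero spanv_add spanv_scale)

lemma isotropic_replacement_exists:
  assumes fs_Omega: "\<forall>j<k. fs j \<in> Omega n" and indep: "lin_indep k fs"
    and iso: "isotropic n (spanv k fs)" and "i < k"
  shows "\<exists>f\<in>Omega n. f \<notin> spanv k fs \<and> isotropic n (spanv k (fs(i := f)))"
proof -
  obtain f where "f \<in> Omega n" and f_dual: "\<forall>j<k. symp n (fs j) f = (if j = i then 1 else 0)"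
    using symp_dual_vector_exists[OF fs_Omega indep \<open>i < k\<close>] by blast
  have fs_commute: "symp n (fs a) (fs b) = 0" if "a < k" "b < k" for a b
    using iso spanv_generator[OF that(1)] spanv_generator[OF that(2)]
    unfolding isotropic_def by blast
  have "f \<notin> spanv k fs"
  proof
    assume "f \<in> spanv k fs"
    with iso spanv_generator[OF \<open>i < k\<close>] have "symp n (fs i) f = 0"
      unfolding isotropic_def by blast
    with f_dual \<open>i < k\<close> show False by simp
  qed
  moreover have "\<forall>a<k. \<forall>b<k. symp n ((fs(i := f)) a) ((fs(i := f)) b) = 0"
  proof (intro allI impI)
    fix a b assume "a < k" "b < k"
    then show "symp n ((fs(i := f)) a) ((fs(i := f)) b) = 0"
      using f_dual fs_commute symp_self[of n f] symp_antisym[of n f "fs b"] by auto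
  qed
  ultimately show ?thesis
    using \<open>f \<in> Omega n\<close> isotropic_spanvI by blast
qed

lemma theorem5_claim_over_field: "theorem5_claim n k (fs :: nat \<Rightarrow> nat \<Rightarrow> 'a::field) J v"
  unfolding theorem5_claim_def
proof (intro impI)
  assume "1 \<le> k \<and> (\<forall>i<k. fs i \<in> Omega n) \<and> lin_indep k fs
    \<and> (\<forall>j\<in>J. epistemic_state n (spanv k fs) (v j))
    \<and> totally_unknown n (fs (k - 1)) J v \<and> (\<forall>i<k - 1. constant_obs n (fs i) J v)"
  then have "k - 1 < k" and fs_Omega: "\<forall>i<k. fs i \<in> Omega n" and indep: "lin_indep k fs"
    and states: "\<forall>j\<in>J. epistemic_state n (spanv k fs) (v j)"
    and unknown: "totally_unknown n (fs (k - 1)) J v"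
    by auto
  have "(\<lambda>_. 0) \<in> Omega n" by (simp add: Omega_def)
  with unknown obtain j0 where "j0 \<in> J"
    unfolding totally_unknown_def by blast
  with states have "isotropic n (spanv k fs)"
    by (simp add: epistemic_state_def)
  then obtain f where f_Omega: "f \<in> Omega n" and f_new: "f \<notin> spanv k fs"
    and iso': "isotropic n (spanv k (fs(k - 1 := f)))"
    using isotropic_replacement_exists[OF fs_Omega indep _ \<open>k - 1 < k\<close>] by blast
  have f_notin: "f \<notin> spanv (k - 1) fs"
    using f_new spanv_mono[of "k - 1" k fs] by auto
  have V'_ne_V: "spanv k (fs(k - 1 := f)) \<noteq> spanv k fs"
    using f_new spanv_generator[OF \<open>k - 1 < k\<close>, of "fs(k - 1 := f)"] by auto
  have states': "\<forall>j\<in>J. epistemic_state n (spanv k (fs(k - 1 := f))) (v j)"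
  proof
    fix j assume "j \<in> J"
    with states have "v j \<in> Omega n"
      by (simp add: epistemic_state_def)
    moreover have "\<forall>i<k. (fs(k - 1 := f)) i \<in> Omega n"
      using fs_Omega f_Omega by simp
    ultimately show "epistemic_state n (spanv k (fs(k - 1 := f))) (v j)"
      using iso' by (intro epistemic_state_spanvI)
  qed
  show "\<exists>f\<in>Omega n. f \<notin> spanv (k - 1) fs \<and> isotropic n (spanv k (fs(k - 1 := f)))
    \<and> spanv k (fs(k - 1 := f)) \<noteq> spanv k fs
    \<and> (\<forall>j\<in>J. epistemic_state n (spanv k (fs(k - 1 := f))) (v j))"
    by (intro bexI[of _ f] conjI f_Omega f_notin iso' V'_ne_V states')
qed

theorem mainTheorem5:
  shows "(\<forall>(n::nat) (k::nat) (fs :: nat \<Rightarrow> nat \<Rightarrow> real) (J :: 'j set) v.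
            theorem5_claim n k fs J v)
       \<and> (\<forall>(n::nat) (k::nat) (fs :: nat \<Rightarrow> nat \<Rightarrow> 'p::prime_card mod_ring) (J :: 'j set) v.
            theorem5_claim n k fs J v)"
  by (simp add: theorem5_claim_over_field)

end
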